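(* Let $n_1,n_2,n_3\ge2$, $b,\sigma>0$, $r\le\min\{n_1,n_2\}$, $r\le s\le rn_2n_3$, $1\le m\le n_1n_2n_3$, $\Omega\sim\mathrm{Bern}(\frac{m}{n_1n_2n_3})$, and $\mathcal{Y}_{ijk}=\mathcal{X}^*_{ijk}+\sigma\epsilon_{ijk}$ for $(i,j,k)\in\Omega$ with $\epsilon_{ijk}$ i.i.d. $N(0,1)$. Then there exist $C,\beta_c>0$ such that \[ \inf_{\widetilde{\mathcal{X}}}\sup_{\mathcal{X}^*\in\mathfrak{U}(r,b,s)}\frac{\mathbb{E}_{\Omega,\mathcal{Y}_\Omega}\|\widetilde{\mathcal{X}}-\mathcal{X}^*\|_F^2}{n_1n_2n_3}\ge C\min\left\{\Delta b^2,\ \beta_c^2\sigma^2\left(\frac{s+rn_1n_3}{m}\right)\right\}, \] where $\Delta=\min\{1,\frac{s}{n_2n_3}\}$ and the infimum is over all estimators.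
   Context: Tensor-tensor product $\diamond$: for $\mathcal{X}\in\mathbb{R}^{n_1\times n_2\times n_3}$ with frontal slices $\mathbf{X}^{(1)},\dots,\mathbf{X}^{(n_3)}$ and $\mathcal{Y}\in\mathbb{R}^{n_2\times n_4\times n_3}$, $\mathcal{X}\diamond\mathcal{Y}$ is obtained by multiplying the block-circulant matrix with $(p,q)$ block $\mathbf{X}^{((p-q)\bmod n_3+1)}$ by the vertical stack of the frontal slices of $\mathcal{Y}$ and folding back. $\Omega\sim\mathrm{Bern}(\gamma)$: each index included independently with probability $\gamma$. $\mathfrak{U}(r,b,s)=\{\mathcal{A}\diamond\mathcal{B}\in\mathbb{R}_+^{n_1\times n_2\times n_3}:\mathcal{A}\in\mathbb{R}_+^{n_1\times r\times n_3},0\le\mathcal{A}_{ijk}\le1,\ \mathcal{B}\in\mathbb{R}_+^{r\times n_2\times n_3},0\le\mathcal{B}_{ijk}\le b,\ \|\mathcal{B}\|_0\le s\}$, with $\|\cdot\|_0$ the number of nonzero entries. *)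

theory Defs
  imports "HOL-Probability.Probability"
begin

type_synonym idx = "nat \<times> nat \<times> nat"
type_synonym tensor = "idx \<Rightarrow> real"

definition tidx :: "nat \<Rightarrow> nat \<Rightarrow> nat \<Rightarrow> idx set" where
  "tidx n1 n2 n3 = {0..<n1} \<times> {0..<n2} \<times> {0..<n3}"

text \<open>Tensor-tensor product of A (n1 x r x n3) and B (r x n2 x n3), via the
 block-circulant matrix whose (p,q) block is the frontal slice (p-q) mod n3 (0-based).\<close>
definition tprod :: "nat \<Rightarrow> nat \<Rightarrow> tensor \<Rightarrow> tensor \<Rightarrow> tensor" where
  "tprod r n3 A B = (\<lambda>(i,j,k). \<Sum>l<r. \<Sum>q<n3. A (i, l, (k + n3 - q) mod n3) * B (l, j, q))"

definition tclass :: "nat \<Rightarrow> nat \<Rightarrow> nat \<Rightarrow> nat \<Rightarrow> real \<Rightarrow> nat \<Rightarrow> tensor set" where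
  "tclass n1 n2 n3 r b s = {X. \<exists>A B.
      (\<forall>t\<in>tidx n1 r n3. 0 \<le> A t \<and> A t \<le> 1) \<and>
      (\<forall>t\<in>tidx r n2 n3. 0 \<le> B t \<and> B t \<le> b) \<and>
      card {t\<in>tidx r n2 n3. B t \<noteq> 0} \<le> s \<and>
      (\<forall>t. X t = (if t \<in> tidx n1 n2 n3 then tprod r n3 A B t else 0))}"

text \<open>Observation of one entry: (is it in Omega, observed value (0 if unobserved)).\<close>
definition obs_space :: "(bool \<times> real) measure" where
  "obs_space = count_space UNIV \<Otimes>\<^sub>M borel"

definition entry_law :: "real \<Rightarrow> real \<Rightarrow> tensor \<Rightarrow> idx \<Rightarrow> (bool \<times> real) measure" where
  "entry_law \<gamma> \<sigma> X t = distr (measure_pmf (bernoulli_pmf \<gamma>) \<Otimes>\<^sub>M density lborel std_normal_density)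
      obs_space (\<lambda>(d, e). (d, if d then X t + \<sigma> * e else 0))"

definition obs_law :: "nat \<Rightarrow> nat \<Rightarrow> nat \<Rightarrow> real \<Rightarrow> real \<Rightarrow> tensor \<Rightarrow> (idx \<Rightarrow> bool \<times> real) measure" where
  "obs_law n1 n2 n3 \<gamma> \<sigma> X = PiM (tidx n1 n2 n3) (entry_law \<gamma> \<sigma> X)"

definition estimators :: "nat \<Rightarrow> nat \<Rightarrow> nat \<Rightarrow> ((idx \<Rightarrow> bool \<times> real) \<Rightarrow> tensor) set" where
  "estimators n1 n2 n3 = {E. \<forall>t\<in>tidx n1 n2 n3.
      (\<lambda>\<omega>. E \<omega> t) \<in> borel_measurable (PiM (tidx n1 n2 n3) (\<lambda>_. obs_space))}"

definition risk :: "nat \<Rightarrow> nat \<Rightarrow> nat \<Rightarrow> real \<Rightarrow> real \<Rightarrow> ((idx \<Rightarrow> bool \<times> real) \<Rightarrow> tensor) \<Rightarrow> tensor \<Rightarrow> ennreal" where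
  "risk n1 n2 n3 \<gamma> \<sigma> E X =
     (\<integral>\<^sup>+ \<omega>. ennreal (\<Sum>t\<in>tidx n1 n2 n3. (E \<omega> t - X t)\<^sup>2) \<partial>obs_law n1 n2 n3 \<gamma> \<sigma> X)"

end

(*
  Assouad's method. Observing an entry of mean x is a Bernoulli(gamma) coin followed, on success,
  by a Gaussian reading; the likelihood ratio against mean 0 is explicit, and the Hellinger
  affinity of two such laws is 1 - gamma + gamma exp(-(x - x')^2 / (8 sigma^2)). Since the entries
  are independent, affinities multiply, and a pointwise AM-GM argument (Le Cam) bounds the sum of
  the risks of any estimator at two tensors by their squared distance times the squared affinity.

  We apply this to hypercubes of block tensors in U(r,b,s): blocks of L entries share an amplitude
  delta that is switched on or off independently. With delta^2 = min(b^2, sigma^2/(gamma L)) the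
  affinity across one flipped block stays above 7/8, and averaging over the cube gives risk
  >= (number of blocks) L delta^2 / 16. Replicating a sparse r x n2 x n3 core along the rows gives
  the term min(1, s/(n2 n3)) b^2 versus sigma^2 s/m; replicating an n1 x r x n3 factor along the
  columns gives the term versus sigma^2 r n1 n3 / m. The better of the two yields the bound with
  C = 1/64 and beta_c = 1.
*)
theory Submission
  imports Defs
begin

section \<open>Observation law of one entry\<close>

definition obs_entry :: "real \<Rightarrow> real \<Rightarrow> real \<Rightarrow> (bool \<times> real) measure" where
  "obs_entry \<gamma> \<sigma> x = distr (measure_pmf (bernoulli_pmf \<gamma>) \<Otimes>\<^sub>M std_normal_distribution) obs_space
      (\<lambda>(d, e). (d, if d then x + \<sigma> * e else 0))"

lemma entry_law_eq_obs_entry: "entry_law \<gamma> \<sigma> X = (\<lambda>t. obs_entry \<gamma> \<sigma> (X t))"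
  unfolding entry_law_def obs_entry_def ..

lemma measurable_observe:
  "(\<lambda>(d, e). (d, if d then x + \<sigma> * e else 0)) \<in>
     measure_pmf (bernoulli_pmf \<gamma>) \<Otimes>\<^sub>M std_normal_distribution \<rightarrow>\<^sub>M obs_space"
  unfolding obs_space_def by measurable

lemma sets_obs_entry [simp, measurable_cong]: "sets (obs_entry \<gamma> \<sigma> x) = sets obs_space"
  by (simp add: obs_entry_def)

lemma space_obs_entry: "space (obs_entry \<gamma> \<sigma> x) = space obs_space"
  by (rule sets_eq_imp_space_eq) simp

lemma prob_space_obs_entry: "prob_space (obs_entry \<gamma> \<sigma> x)"
  unfolding obs_entry_def
  by (intro prob_space.prob_space_distr[OF _ measurable_observe] prob_space_pair
        prob_space_measure_pmf prob_space_normal_density) simp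

lemma nn_integral_obs_entry:
  assumes [measurable]: "f \<in> borel_measurable obs_space" and "0 \<le> \<gamma>" "\<gamma> \<le> 1"
  shows "(\<integral>\<^sup>+z. f z \<partial>obs_entry \<gamma> \<sigma> x) =
     ennreal \<gamma> * (\<integral>\<^sup>+e. f (True, x + \<sigma> * e) \<partial>std_normal_distribution) + ennreal (1 - \<gamma>) * f (False, 0)"
proof -
  interpret N: prob_space std_normal_distribution
    using prob_space_normal_density[of 1 0] by simp
  have "(\<integral>\<^sup>+z. f z \<partial>obs_entry \<gamma> \<sigma> x) =
      (\<integral>\<^sup>+d. (\<integral>\<^sup>+e. f (d, if d then x + \<sigma> * e else 0) \<partial>std_normal_distribution) \<partial>bernoulli_pmf \<gamma>)"
  proof -
    have "(\<lambda>(d, e). f (d, if d then x + \<sigma> * e else 0)) \<in>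
        borel_measurable (measure_pmf (bernoulli_pmf \<gamma>) \<Otimes>\<^sub>M std_normal_distribution)"
      using measurable_comp[OF measurable_observe assms(1)] by (simp add: comp_def case_prod_beta)
    then show ?thesis
      unfolding obs_entry_def
      by (simp add: nn_integral_distr[OF measurable_observe] N.nn_integral_fst[symmetric]
          case_prod_beta cong: if_cong)
  qed
  also have "\<dots> = (\<integral>\<^sup>+e. f (True, x + \<sigma> * e) \<partial>std_normal_distribution) * \<gamma> + f (False, 0) * (1 - \<gamma>)"
    using assms(2,3) N.emeasure_space_1 by (subst nn_integral_bernoulli_pmf) auto
  finally show ?thesis by (simp add: mult.commute)
qed

lemma nn_integral_std_normal_tilt:
  fixes g :: "real \<Rightarrow> ennreal"
  assumes [measurable]: "g \<in> borel_measurable borel"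
  shows "(\<integral>\<^sup>+e. ennreal (exp (u * e - u\<^sup>2 / 2)) * g e \<partial>std_normal_distribution)
       = (\<integral>\<^sup>+e. g (e + u) \<partial>std_normal_distribution)"
proof -
  have tilt: "std_normal_density e * exp (u * e - u\<^sup>2 / 2) = std_normal_density (e - u)" for e
  proof -
    have "exp (- e\<^sup>2 / 2) * exp (u * e - u\<^sup>2 / 2) = exp (- (e - u)\<^sup>2 / 2)"
      by (simp add: exp_add[symmetric] power2_eq_square algebra_simps)
    then show ?thesis by (simp add: std_normal_density_def)
  qed
  have "(\<integral>\<^sup>+e. ennreal (exp (u * e - u\<^sup>2 / 2)) * g e \<partial>std_normal_distribution)
     = (\<integral>\<^sup>+e. ennreal (std_normal_density (e - u)) * g e \<partial>lborel)"
    by (subst nn_integral_density)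
       (auto intro!: nn_integral_cong simp: tilt[symmetric] ennreal_mult' mult_ac)
  also have "\<dots> = (\<integral>\<^sup>+e. ennreal (std_normal_density (u + 1 * e - u)) * g (u + 1 * e) \<partial>lborel)"
    by (subst nn_integral_real_affine[where c=1 and t=u]) auto
  also have "\<dots> = (\<integral>\<^sup>+e. g (e + u) \<partial>std_normal_distribution)"
    by (subst nn_integral_density) (auto simp: add.commute)
  finally show ?thesis .
qed

definition lr_entry :: "real \<Rightarrow> real \<Rightarrow> bool \<times> real \<Rightarrow> real" where
  "lr_entry \<sigma> x z = (if fst z then exp ((2 * x * snd z - x\<^sup>2) / (2 * \<sigma>\<^sup>2)) else 1)"

lemma lr_entry_pos: "0 < lr_entry \<sigma> x z"
  by (simp add: lr_entry_def)

lemma borel_measurable_lr_entry [measurable]: "lr_entry \<sigma> x \<in> borel_measurable obs_space"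
  unfolding lr_entry_def obs_space_def by measurable

lemma measurable_observed_True [measurable]:
  "f \<in> borel_measurable M \<Longrightarrow> (\<lambda>e. (True, f e)) \<in> M \<rightarrow>\<^sub>M obs_space"
  unfolding obs_space_def by measurable

lemma obs_entry_eq_density:
  assumes "0 \<le> \<gamma>" "\<gamma> \<le> 1" and "0 < \<sigma>"
  shows "obs_entry \<gamma> \<sigma> x = density (obs_entry \<gamma> \<sigma> 0) (\<lambda>z. ennreal (lr_entry \<sigma> x z))"
proof (rule measure_eqI)
  fix A assume "A \<in> sets (obs_entry \<gamma> \<sigma> x)"
  then have A [measurable]: "A \<in> sets obs_space" by simp
  define u where "u = x / \<sigma>"
  have lr_True: "lr_entry \<sigma> x (True, \<sigma> * e) = exp (u * e - u\<^sup>2 / 2)" for e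
    using \<open>0 < \<sigma>\<close> by (simp add: lr_entry_def u_def power2_eq_square field_simps)
  have "emeasure (density (obs_entry \<gamma> \<sigma> 0) (\<lambda>z. ennreal (lr_entry \<sigma> x z))) A
      = (\<integral>\<^sup>+z. ennreal (lr_entry \<sigma> x z) * indicator A z \<partial>obs_entry \<gamma> \<sigma> 0)"
    by (rule emeasure_density) auto
  also have "\<dots> = ennreal \<gamma> * (\<integral>\<^sup>+e. ennreal (exp (u * e - u\<^sup>2 / 2)) * indicator A (True, \<sigma> * e)
        \<partial>std_normal_distribution) + ennreal (1 - \<gamma>) * indicator A (False, 0)"
    using assms(1,2) by (subst nn_integral_obs_entry) (simp_all add: lr_True lr_entry_def[of _ _ "(False, _)"])
  also have "\<dots> = ennreal \<gamma> * (\<integral>\<^sup>+e. indicator A (True, \<sigma> * (e + u)) \<partial>std_normal_distribution)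
        + ennreal (1 - \<gamma>) * indicator A (False, 0)"
    by (subst nn_integral_std_normal_tilt) simp_all
  also have "\<dots> = emeasure (obs_entry \<gamma> \<sigma> x) A"
    using assms by (simp add: nn_integral_obs_entry nn_integral_indicator[symmetric] u_def
        distrib_left add.commute del: nn_integral_indicator)
  finally show "emeasure (obs_entry \<gamma> \<sigma> x) A = emeasure (density (obs_entry \<gamma> \<sigma> 0) (\<lambda>z. ennreal (lr_entry \<sigma> x z))) A" ..
qed simp

definition hellinger_entry :: "real \<Rightarrow> real \<Rightarrow> real \<Rightarrow> bool \<times> real \<Rightarrow> real" where
  "hellinger_entry \<sigma> x x' z = sqrt (lr_entry \<sigma> x z * lr_entry \<sigma> x' z)"

definition affinity :: "real \<Rightarrow> real \<Rightarrow> real \<Rightarrow> real \<Rightarrow> real" where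
  "affinity \<gamma> \<sigma> x x' = 1 - \<gamma> + \<gamma> * exp (- (x - x')\<^sup>2 / (8 * \<sigma>\<^sup>2))"

lemma borel_measurable_hellinger_entry [measurable]:
  "hellinger_entry \<sigma> x x' \<in> borel_measurable obs_space"
  unfolding hellinger_entry_def by measurable

lemma hellinger_entry_nonneg: "0 \<le> hellinger_entry \<sigma> x x' z"
  by (simp add: hellinger_entry_def lr_entry_pos less_imp_le)

lemma hellinger_entry_sq: "(hellinger_entry \<sigma> x x' z)\<^sup>2 = lr_entry \<sigma> x z * lr_entry \<sigma> x' z"
  by (simp add: hellinger_entry_def lr_entry_pos less_imp_le)

lemma affinity_nonneg: "0 \<le> \<gamma> \<Longrightarrow> \<gamma> \<le> 1 \<Longrightarrow> 0 \<le> affinity \<gamma> \<sigma> x x'"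
  unfolding affinity_def by simp

lemma affinity_commute: "affinity \<gamma> \<sigma> x x' = affinity \<gamma> \<sigma> x' x"
  by (simp add: affinity_def power2_commute)

lemma affinity_same [simp]: "affinity \<gamma> \<sigma> x x = 1"
  by (simp add: affinity_def)

lemma nn_integral_hellinger_entry:
  assumes "0 \<le> \<gamma>" "\<gamma> \<le> 1" and "0 < \<sigma>"
  shows "(\<integral>\<^sup>+z. ennreal (hellinger_entry \<sigma> x x' z) \<partial>obs_entry \<gamma> \<sigma> 0) = ennreal (affinity \<gamma> \<sigma> x x')"
proof -
  interpret N: prob_space std_normal_distribution
    using prob_space_normal_density[of 1 0] by simp
  define u where "u = (x + x') / (2 * \<sigma>)"
  define c where "c = exp (- (x - x')\<^sup>2 / (8 * \<sigma>\<^sup>2))"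
  have sqrt_exp: "sqrt (exp a) = exp (a / 2)" for a :: real
    by (rule real_sqrt_unique) (simp_all add: power2_eq_square exp_add[symmetric])
  have hellinger_True: "hellinger_entry \<sigma> x x' (True, \<sigma> * e) = exp (u * e - u\<^sup>2 / 2) * c" for e
  proof -
    have "((2 * x * (\<sigma> * e) - x\<^sup>2) / (2 * \<sigma>\<^sup>2) + (2 * x' * (\<sigma> * e) - x'\<^sup>2) / (2 * \<sigma>\<^sup>2)) / 2
        = - (x - x')\<^sup>2 / (8 * \<sigma>\<^sup>2) + (u * e - u\<^sup>2 / 2)"
      using \<open>0 < \<sigma>\<close> by (simp add: u_def power2_eq_square field_simps)
    then show ?thesis
      by (simp add: hellinger_entry_def lr_entry_def exp_add[symmetric] sqrt_exp c_def)
  qed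
  have "(\<integral>\<^sup>+z. ennreal (hellinger_entry \<sigma> x x' z) \<partial>obs_entry \<gamma> \<sigma> 0) =
      ennreal \<gamma> * (\<integral>\<^sup>+e. ennreal (exp (u * e - u\<^sup>2 / 2)) * ennreal c \<partial>std_normal_distribution)
      + ennreal (1 - \<gamma>)"
    using assms(1,2) by (subst nn_integral_obs_entry)
      (simp_all add: hellinger_True ennreal_mult' c_def hellinger_entry_def[of _ _ _ "(False, _)"] lr_entry_def)
  also have "(\<integral>\<^sup>+e. ennreal (exp (u * e - u\<^sup>2 / 2)) * ennreal c \<partial>std_normal_distribution) = ennreal c"
    by (subst nn_integral_std_normal_tilt) (simp_all add: N.emeasure_space_1[simplified])
  finally show ?thesis
    using assms(1,2) by (simp add: affinity_def c_def ennreal_mult'[symmetric] ennreal_plus[symmetric]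
        del: ennreal_plus)
qed

section \<open>Independent observations of all entries\<close>

definition lr_prod :: "real \<Rightarrow> ('i \<Rightarrow> real) \<Rightarrow> 'i set \<Rightarrow> ('i \<Rightarrow> bool \<times> real) \<Rightarrow> real" where
  "lr_prod \<sigma> X I \<omega> = (\<Prod>t\<in>I. lr_entry \<sigma> (X t) (\<omega> t))"

lemma lr_prod_pos: "0 < lr_prod \<sigma> X I \<omega>"
  unfolding lr_prod_def by (rule prod_pos) (simp add: lr_entry_pos)

lemma borel_measurable_lr_prod [measurable]:
  "finite I \<Longrightarrow> lr_prod \<sigma> X I \<in> borel_measurable (PiM I (\<lambda>_. obs_entry \<gamma> \<sigma> 0))"
  unfolding lr_prod_def by measurable

lemma indicator_PiE_eq_prod:
  assumes "\<omega> \<in> extensional I" "finite I"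
  shows "indicator (PiE I A) \<omega> = (\<Prod>t\<in>I. indicator (A t) (\<omega> t) :: ennreal)"
proof (cases "\<forall>t\<in>I. \<omega> t \<in> A t")
  case True
  then show ?thesis using assms by (simp add: PiE_def)
next
  case False
  then obtain t where t: "t \<in> I" "\<omega> t \<notin> A t" by auto
  then have "\<omega> \<notin> PiE I A" by auto
  moreover have "(\<Prod>t\<in>I. indicator (A t) (\<omega> t) :: ennreal) = 0"
    using t assms(2) by (intro prod_zero) (auto intro!: bexI[of _ t])
  ultimately show ?thesis by simp
qed

lemma sets_PiM_obs_entry: "sets (PiM I (\<lambda>t. obs_entry \<gamma> \<sigma> (X t))) = sets (PiM I (\<lambda>_. obs_space))"
  by (rule sets_PiM_cong) simp_all

lemma product_sigma_finite_obs_entry: "product_sigma_finite (\<lambda>t. obs_entry \<gamma> \<sigma> (X t))"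
  unfolding product_sigma_finite_def using prob_space_obs_entry prob_space_imp_sigma_finite by blast

lemma PiM_obs_entry_eq_density:
  assumes "0 \<le> \<gamma>" "\<gamma> \<le> 1" and "0 < \<sigma>" and I: "finite I"
  shows "PiM I (\<lambda>t. obs_entry \<gamma> \<sigma> (X t)) = density (PiM I (\<lambda>_. obs_entry \<gamma> \<sigma> 0)) (\<lambda>\<omega>. ennreal (lr_prod \<sigma> X I \<omega>))"
proof -
  interpret P: product_sigma_finite "\<lambda>t. obs_entry \<gamma> \<sigma> (X t)"
    by (rule product_sigma_finite_obs_entry)
  interpret P0: product_sigma_finite "\<lambda>_. obs_entry \<gamma> \<sigma> 0"
    using product_sigma_finite_obs_entry[of \<gamma> \<sigma> "\<lambda>_. 0"] .
  show ?thesis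
  proof (rule P.PiM_eqI[OF I, symmetric])
    fix A assume A: "\<And>t. t \<in> I \<Longrightarrow> A t \<in> sets (obs_entry \<gamma> \<sigma> (X t))"
    then have A0: "\<And>t. t \<in> I \<Longrightarrow> A t \<in> sets (obs_entry \<gamma> \<sigma> 0)" by simp
    have "emeasure (density (PiM I (\<lambda>_. obs_entry \<gamma> \<sigma> 0)) (\<lambda>\<omega>. ennreal (lr_prod \<sigma> X I \<omega>))) (PiE I A)
        = (\<integral>\<^sup>+\<omega>. ennreal (lr_prod \<sigma> X I \<omega>) * indicator (PiE I A) \<omega> \<partial>PiM I (\<lambda>_. obs_entry \<gamma> \<sigma> 0))"
    proof (rule emeasure_density)
      show "(\<lambda>\<omega>. ennreal (lr_prod \<sigma> X I \<omega>)) \<in> borel_measurable (PiM I (\<lambda>_. obs_entry \<gamma> \<sigma> 0))"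
        using I by measurable
      show "PiE I A \<in> sets (PiM I (\<lambda>_. obs_entry \<gamma> \<sigma> 0))"
        using A0 I by (simp add: sets_PiM_I_finite)
    qed
    also have "\<dots> = (\<integral>\<^sup>+\<omega>. (\<Prod>t\<in>I. ennreal (lr_entry \<sigma> (X t) (\<omega> t)) * indicator (A t) (\<omega> t))
        \<partial>PiM I (\<lambda>_. obs_entry \<gamma> \<sigma> 0))"
    proof (rule nn_integral_cong)
      fix \<omega> assume "\<omega> \<in> space (PiM I (\<lambda>_. obs_entry \<gamma> \<sigma> 0))"
      then have "\<omega> \<in> extensional I" by (simp add: space_PiM PiE_def)
      moreover have "ennreal (lr_prod \<sigma> X I \<omega>) = (\<Prod>t\<in>I. ennreal (lr_entry \<sigma> (X t) (\<omega> t)))"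
        unfolding lr_prod_def by (simp add: prod_ennreal lr_entry_pos less_imp_le)
      ultimately show "ennreal (lr_prod \<sigma> X I \<omega>) * indicator (PiE I A) \<omega>
          = (\<Prod>t\<in>I. ennreal (lr_entry \<sigma> (X t) (\<omega> t)) * indicator (A t) (\<omega> t))"
        using I by (simp add: indicator_PiE_eq_prod prod.distrib)
    qed
    also have "\<dots> = (\<Prod>t\<in>I. \<integral>\<^sup>+z. ennreal (lr_entry \<sigma> (X t) z) * indicator (A t) z \<partial>obs_entry \<gamma> \<sigma> 0)"
      by (rule P0.product_nn_integral_prod[OF I]) (use A0 in measurable)
    also have "\<dots> = (\<Prod>t\<in>I. emeasure (obs_entry \<gamma> \<sigma> (X t)) (A t))"
    proof (rule prod.cong[OF refl])
      fix t assume "t \<in> I"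
      then show "(\<integral>\<^sup>+z. ennreal (lr_entry \<sigma> (X t) z) * indicator (A t) z \<partial>obs_entry \<gamma> \<sigma> 0)
          = emeasure (obs_entry \<gamma> \<sigma> (X t)) (A t)"
        using A0 by (subst obs_entry_eq_density[OF assms(1-3), of "X t"]) (simp add: emeasure_density)
    qed
    finally show "emeasure (density (PiM I (\<lambda>_. obs_entry \<gamma> \<sigma> 0)) (\<lambda>\<omega>. ennreal (lr_prod \<sigma> X I \<omega>))) (PiE I A)
        = (\<Prod>t\<in>I. emeasure (obs_entry \<gamma> \<sigma> (X t)) (A t))" .
  qed (simp cong: sets_PiM_cong)
qed

lemma nn_integral_lr_prod:
  assumes "0 \<le> \<gamma>" "\<gamma> \<le> 1" and "0 < \<sigma>" and "finite I"
  shows "(\<integral>\<^sup>+\<omega>. ennreal (lr_prod \<sigma> X I \<omega>) \<partial>PiM I (\<lambda>_. obs_entry \<gamma> \<sigma> 0)) = 1"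
proof -
  interpret P: prob_space "PiM I (\<lambda>t. obs_entry \<gamma> \<sigma> (X t))"
    by (intro prob_space_PiM prob_space_obs_entry)
  have "1 = emeasure (PiM I (\<lambda>t. obs_entry \<gamma> \<sigma> (X t))) (space (PiM I (\<lambda>_. obs_entry \<gamma> \<sigma> 0)))"
    using P.emeasure_space_1 by (simp add: space_PiM space_obs_entry)
  also have "\<dots> = (\<integral>\<^sup>+\<omega>. ennreal (lr_prod \<sigma> X I \<omega>) \<partial>PiM I (\<lambda>_. obs_entry \<gamma> \<sigma> 0))"
    by (subst PiM_obs_entry_eq_density[OF assms], subst emeasure_density) (use assms(4) in measurable)
  finally show ?thesis ..
qed

lemma nn_integral_hellinger_prod:
  assumes "0 \<le> \<gamma>" "\<gamma> \<le> 1" and "0 < \<sigma>" and I: "finite I"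
  shows "(\<integral>\<^sup>+\<omega>. ennreal (\<Prod>t\<in>I. hellinger_entry \<sigma> (X t) (X' t) (\<omega> t)) \<partial>PiM I (\<lambda>_. obs_entry \<gamma> \<sigma> 0))
     = ennreal (\<Prod>t\<in>I. affinity \<gamma> \<sigma> (X t) (X' t))"
proof -
  interpret P0: product_sigma_finite "\<lambda>_. obs_entry \<gamma> \<sigma> 0"
    using product_sigma_finite_obs_entry[of \<gamma> \<sigma> "\<lambda>_. 0"] .
  have "(\<integral>\<^sup>+\<omega>. ennreal (\<Prod>t\<in>I. hellinger_entry \<sigma> (X t) (X' t) (\<omega> t)) \<partial>PiM I (\<lambda>_. obs_entry \<gamma> \<sigma> 0))
      = (\<integral>\<^sup>+\<omega>. (\<Prod>t\<in>I. ennreal (hellinger_entry \<sigma> (X t) (X' t) (\<omega> t))) \<partial>PiM I (\<lambda>_. obs_entry \<gamma> \<sigma> 0))"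
    by (simp add: prod_ennreal hellinger_entry_nonneg)
  also have "\<dots> = (\<Prod>t\<in>I. \<integral>\<^sup>+z. ennreal (hellinger_entry \<sigma> (X t) (X' t) z) \<partial>obs_entry \<gamma> \<sigma> 0)"
    by (rule P0.product_nn_integral_prod[OF I]) measurable
  also have "\<dots> = ennreal (\<Prod>t\<in>I. affinity \<gamma> \<sigma> (X t) (X' t))"
    using assms by (simp add: nn_integral_hellinger_entry affinity_nonneg prod_ennreal)
  finally show ?thesis .
qed

section \<open>Le Cam's two-point bound\<close>

text \<open>AM-GM in the form \<open>2 \<epsilon> h \<le> min p q + \<epsilon>\<^sup>2 (p + q)\<close>, combined with
  \<open>D min p q \<le> 2 (p G + q H)\<close>.\<close>
lemma two_point_pointwise:
  fixes p q h \<epsilon> D G H :: real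
  assumes "0 \<le> p" "0 \<le> q" "0 \<le> h" "h\<^sup>2 = p * q" "0 \<le> \<epsilon>"
    and "0 \<le> G" "0 \<le> H" "0 \<le> D" "D \<le> 2 * (G + H)"
  shows "D * \<epsilon> * h \<le> p * G + q * H + D / 2 * \<epsilon>\<^sup>2 * (p + q)"
proof -
  have h: "h = sqrt p * sqrt q"
    using assms by (metis real_sqrt_mult real_sqrt_unique)
  have "2 * \<epsilon> * h \<le> p + \<epsilon>\<^sup>2 * q" "2 * \<epsilon> * h \<le> q + \<epsilon>\<^sup>2 * p"
    using assms(1,2) h sum_power2_ge_zero[of "sqrt p - \<epsilon> * sqrt q" 0] sum_power2_ge_zero[of "sqrt q - \<epsilon> * sqrt p" 0]
    by (simp_all add: power2_eq_square algebra_simps)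
  moreover have "0 \<le> \<epsilon>\<^sup>2 * p" "0 \<le> \<epsilon>\<^sup>2 * q"
    using assms(1,2) by simp_all
  ultimately have amgm: "2 * \<epsilon> * h \<le> min p q + \<epsilon>\<^sup>2 * (p + q)"
    by (simp add: min_def distrib_left)
  have "min p q * D \<le> min p q * (2 * (G + H))"
    using assms by (intro mult_left_mono) auto
  also have "\<dots> \<le> 2 * (p * G + q * H)"
    using assms by (simp add: distrib_left add_mono mult_right_mono)
  finally have "min p q * D \<le> 2 * (p * G + q * H)" .
  moreover have "D * (2 * \<epsilon> * h) \<le> D * (min p q + \<epsilon>\<^sup>2 * (p + q))"
    using amgm assms(8) by (rule mult_left_mono)
  ultimately show ?thesis by (simp add: field_simps)
qed

lemma two_point_lower_bound:
  fixes \<nu> :: "'a measure" and p q h G H :: "'a \<Rightarrow> real"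
  assumes [measurable]: "p \<in> borel_measurable \<nu>" "q \<in> borel_measurable \<nu>" "h \<in> borel_measurable \<nu>"
      "G \<in> borel_measurable \<nu>" "H \<in> borel_measurable \<nu>"
    and pos: "\<And>\<omega>. 0 \<le> p \<omega>" "\<And>\<omega>. 0 \<le> q \<omega>" "\<And>\<omega>. 0 \<le> h \<omega>" "\<And>\<omega>. (h \<omega>)\<^sup>2 = p \<omega> * q \<omega>"
    and loss: "\<And>\<omega>. 0 \<le> G \<omega>" "\<And>\<omega>. 0 \<le> H \<omega>" "\<And>\<omega>. D \<le> 2 * (G \<omega> + H \<omega>)" "0 \<le> D"
    and int: "(\<integral>\<^sup>+\<omega>. p \<omega> \<partial>\<nu>) = 1" "(\<integral>\<^sup>+\<omega>. q \<omega> \<partial>\<nu>) = 1" "(\<integral>\<^sup>+\<omega>. h \<omega> \<partial>\<nu>) = ennreal A" "0 \<le> A"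
  shows "ennreal (D * A\<^sup>2 / 4) \<le> (\<integral>\<^sup>+\<omega>. ennreal (p \<omega> * G \<omega>) \<partial>\<nu>) + (\<integral>\<^sup>+\<omega>. ennreal (q \<omega> * H \<omega>) \<partial>\<nu>)"
    (is "_ \<le> ?T")
proof -
  define c where "c = D * A\<^sup>2 / 8"
  have c: "0 \<le> c" using loss(4) by (simp add: c_def)
  have pointwise: "ennreal (D * (A / 2)) * ennreal (h \<omega>)
      \<le> ennreal (p \<omega> * G \<omega>) + ennreal (q \<omega> * H \<omega>) + ennreal c * ennreal (p \<omega>) + ennreal c * ennreal (q \<omega>)" for \<omega>
  proof -
    have "D / 2 * (A / 2)\<^sup>2 * (p \<omega> + q \<omega>) = c * p \<omega> + c * q \<omega>"
      by (simp add: c_def power2_eq_square algebra_simps)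
    then have "D * (A / 2) * h \<omega> \<le> p \<omega> * G \<omega> + q \<omega> * H \<omega> + c * p \<omega> + c * q \<omega>"
      using two_point_pointwise[OF pos(1-4)[of \<omega>] _ loss(1-2)[of \<omega>] loss(4,3), of "A / 2"] int(4)
      by linarith
    then show ?thesis
      using pos loss int(4) c
      by (simp add: ennreal_mult[symmetric] ennreal_plus[symmetric] del: ennreal_plus)
  qed
  have "ennreal (D * (A / 2)) * ennreal A = (\<integral>\<^sup>+\<omega>. ennreal (D * (A / 2)) * ennreal (h \<omega>) \<partial>\<nu>)"
    by (simp add: nn_integral_cmult int(3))
  also have "\<dots> \<le> (\<integral>\<^sup>+\<omega>. ennreal (p \<omega> * G \<omega>) + ennreal (q \<omega> * H \<omega>)
      + ennreal c * ennreal (p \<omega>) + ennreal c * ennreal (q \<omega>) \<partial>\<nu>)"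
    by (rule nn_integral_mono) (rule pointwise)
  also have "\<dots> = ?T + ennreal (2 * c)"
    using c int(1,2) by (simp add: nn_integral_add nn_integral_cmult ennreal_plus[symmetric] del: ennreal_plus)
  also have "2 * c = D * A\<^sup>2 / 4"
    by (simp add: c_def)
  finally have "ennreal (D * A\<^sup>2 / 4) + ennreal (D * A\<^sup>2 / 4) \<le> ?T + ennreal (D * A\<^sup>2 / 4)"
    using loss(4) int(4)
    by (simp add: ennreal_mult[symmetric] ennreal_plus[symmetric] power2_eq_square mult_ac del: ennreal_plus)
  then show ?thesis
    by (simp add: ennreal_add_left_cancel_le add.commute[of ?T])
qed

definition risk_on :: "'i set \<Rightarrow> real \<Rightarrow> real \<Rightarrow> 'i set \<Rightarrow> (('i \<Rightarrow> bool \<times> real) \<Rightarrow> 'i \<Rightarrow> real) \<Rightarrow> ('i \<Rightarrow> real) \<Rightarrow> ennreal" where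
  "risk_on I \<gamma> \<sigma> S E X = (\<integral>\<^sup>+\<omega>. ennreal (\<Sum>t\<in>S. (E \<omega> t - X t)\<^sup>2) \<partial>PiM I (\<lambda>t. obs_entry \<gamma> \<sigma> (X t)))"

lemma risk_eq_risk_on: "risk n1 n2 n3 \<gamma> \<sigma> E X = risk_on (tidx n1 n2 n3) \<gamma> \<sigma> (tidx n1 n2 n3) E X"
  unfolding risk_def risk_on_def obs_law_def entry_law_eq_obs_entry ..

lemma risk_on_two_point:
  assumes "0 \<le> \<gamma>" "\<gamma> \<le> 1" and "0 < \<sigma>" and I: "finite I" and "S \<subseteq> I"
    and E: "\<And>t. t \<in> S \<Longrightarrow> (\<lambda>\<omega>. E \<omega> t) \<in> borel_measurable (PiM I (\<lambda>_. obs_space))"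
  shows "ennreal ((\<Sum>t\<in>S. (X t - X' t)\<^sup>2) * (\<Prod>t\<in>I. affinity \<gamma> \<sigma> (X t) (X' t))\<^sup>2 / 4)
     \<le> risk_on I \<gamma> \<sigma> S E X + risk_on I \<gamma> \<sigma> S E X'"
proof -
  let ?\<nu> = "PiM I (\<lambda>_. obs_entry \<gamma> \<sigma> 0)"
  have [measurable]: "(\<lambda>\<omega>. E \<omega> t) \<in> borel_measurable ?\<nu>" if "t \<in> S" for t
    using E[OF that] measurable_cong_sets[OF sets_PiM_obs_entry[of I \<gamma> \<sigma> "\<lambda>_. 0"] refl] by blast
  have [measurable]: "lr_prod \<sigma> Y I \<in> borel_measurable ?\<nu>" for Y
    using I by (rule borel_measurable_lr_prod)
  have risk_density: "risk_on I \<gamma> \<sigma> S E Y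
      = (\<integral>\<^sup>+\<omega>. ennreal (lr_prod \<sigma> Y I \<omega> * (\<Sum>t\<in>S. (E \<omega> t - Y t)\<^sup>2)) \<partial>?\<nu>)" for Y
    unfolding risk_on_def using assms(5)
    by (subst PiM_obs_entry_eq_density[OF assms(1-4)], subst nn_integral_density)
       (auto intro!: nn_integral_cong simp: ennreal_mult'' sum_nonneg)
  show ?thesis
    unfolding risk_density
  proof (rule two_point_lower_bound)
    show "(\<lambda>\<omega>. \<Prod>t\<in>I. hellinger_entry \<sigma> (X t) (X' t) (\<omega> t)) \<in> borel_measurable ?\<nu>"
      using I by measurable
    show "(\<Prod>t\<in>I. hellinger_entry \<sigma> (X t) (X' t) (\<omega> t))\<^sup>2 = lr_prod \<sigma> X I \<omega> * lr_prod \<sigma> X' I \<omega>" for \<omega>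
      by (simp add: prod_power_distrib hellinger_entry_sq lr_prod_def prod.distrib)
    have "(X t - X' t)\<^sup>2 \<le> 2 * (E \<omega> t - X t)\<^sup>2 + 2 * (E \<omega> t - X' t)\<^sup>2" for \<omega> t
      using zero_le_power2[of "2 * E \<omega> t - X t - X' t"] by (simp add: power2_eq_square algebra_simps)
    then show "(\<Sum>t\<in>S. (X t - X' t)\<^sup>2) \<le> 2 * ((\<Sum>t\<in>S. (E \<omega> t - X t)\<^sup>2) + (\<Sum>t\<in>S. (E \<omega> t - X' t)\<^sup>2))" for \<omega>
      by (simp add: distrib_left sum_distrib_left sum.distrib[symmetric] sum_mono)
  qed (use assms in \<open>auto simp: nn_integral_lr_prod nn_integral_hellinger_prod affinity_nonneg
      prod_nonneg hellinger_entry_nonneg less_imp_le[OF lr_prod_pos] sum_nonneg\<close>)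
qed

section \<open>Assouad's hypercube argument\<close>

lemma affinity_power_ge:
  assumes "0 \<le> \<gamma>" "\<gamma> \<le> 1" and "0 < \<sigma>" and small: "\<gamma> * real L * \<delta>\<^sup>2 \<le> \<sigma>\<^sup>2"
  shows "7 / 8 \<le> affinity \<gamma> \<sigma> \<delta> 0 ^ L"
proof (cases "L = 0")
  case False
  define x where "x = - (\<gamma> * \<delta>\<^sup>2 / (8 * \<sigma>\<^sup>2))"
  have "\<gamma> * \<delta>\<^sup>2 \<le> \<gamma> * \<delta>\<^sup>2 * real L"
    using False mult_nonneg_nonneg[OF assms(1) zero_le_power2[of \<delta>]] by (simp add: mult_le_cancel_left1)
  with small have "\<gamma> * \<delta>\<^sup>2 \<le> \<sigma>\<^sup>2"
    by (simp add: mult_ac)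
  then have "\<gamma> * \<delta>\<^sup>2 \<le> 8 * \<sigma>\<^sup>2"
    using zero_le_power2[of \<sigma>] by linarith
  then have x: "-1 \<le> x"
    using \<open>0 < \<sigma>\<close> by (simp add: x_def field_simps)
  have "1 + x \<le> affinity \<gamma> \<sigma> \<delta> 0"
    using mult_left_mono[OF exp_ge_add_one_self[of "- \<delta>\<^sup>2 / (8 * \<sigma>\<^sup>2)"] assms(1)]
    by (simp add: affinity_def x_def algebra_simps)
  then have "(1 + x) ^ L \<le> affinity \<gamma> \<sigma> \<delta> 0 ^ L"
    using x by (intro power_mono) auto
  then have "1 + real L * x \<le> affinity \<gamma> \<sigma> \<delta> 0 ^ L"
    using Bernoulli_inequality[OF x, of L] by linarith
  moreover have "- 1 / 8 \<le> real L * x"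
    using small \<open>0 < \<sigma>\<close> by (simp add: x_def field_simps)
  ultimately show ?thesis by linarith
qed simp

lemma assouad_hypercube:
  fixes R :: "('a \<Rightarrow> bool) \<Rightarrow> ennreal" and T :: "'a \<Rightarrow> ('a \<Rightarrow> bool) \<Rightarrow> ennreal"
  assumes D: "finite D" and "0 \<le> c"
    and R: "\<And>v. (\<Sum>a\<in>D. T a v) \<le> R v"
    and T: "\<And>a v. a \<in> D \<Longrightarrow> ennreal c \<le> T a v + T a (v(a := \<not> v a))"
  shows "\<exists>v. ennreal (real (card D) * c / 2) \<le> R v"
proof -
  define V where "V = PiE D (\<lambda>_. UNIV :: bool set)"
  have V: "finite V" "V \<noteq> {}"
    unfolding V_def using D by (simp_all add: finite_PiE PiE_eq_empty_iff)
  have flip_V: "v(a := \<not> v a) \<in> V" if "a \<in> D" "v \<in> V" for a v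
    using that by (auto simp: V_def PiE_def extensional_def)
  have pair_sum: "of_nat (card V) * ennreal c \<le> 2 * (\<Sum>v\<in>V. T a v)" if a: "a \<in> D" for a
  proof -
    have "(\<Sum>v\<in>V. T a (v(a := \<not> v a))) = (\<Sum>v\<in>V. T a v)"
      by (rule sum.reindex_bij_witness[of V "\<lambda>v. v(a := \<not> v a)" "\<lambda>v. v(a := \<not> v a)"])
         (auto simp: flip_V[OF a])
    moreover have "(\<Sum>v\<in>V. ennreal c) \<le> (\<Sum>v\<in>V. T a v + T a (v(a := \<not> v a)))"
      by (intro sum_mono T a)
    ultimately show ?thesis by (simp add: sum.distrib mult_2)
  qed
  have "Max (R ` V) \<in> R ` V"
    using V by (intro Max_in) auto
  then obtain w where w: "w \<in> V" "R w = Max (R ` V)"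
    by (metis imageE)
  have R_le_w: "R v \<le> R w" if "v \<in> V" for v
    using V that unfolding w(2) by (intro Max_ge) auto
  have "of_nat (card V) * (of_nat (card D) * ennreal c) = (\<Sum>a\<in>D. of_nat (card V) * ennreal c)"
    by (simp add: mult_ac)
  also have "\<dots> \<le> (\<Sum>a\<in>D. 2 * (\<Sum>v\<in>V. T a v))"
    by (rule sum_mono) (rule pair_sum)
  also have "\<dots> = 2 * (\<Sum>v\<in>V. \<Sum>a\<in>D. T a v)"
    by (simp add: sum_distrib_left sum.swap[of _ D V])
  also have "\<dots> \<le> 2 * (\<Sum>v\<in>V. R w)"
    using R R_le_w by (intro mult_left_mono sum_mono) (auto intro: order_trans)
  finally have "of_nat (card V) * (of_nat (card D) * ennreal c) \<le> of_nat (card V) * (2 * R w)"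
    by (simp add: mult_ac)
  then have "of_nat (card D) * ennreal c \<le> 2 * R w"
    using V by (subst (asm) ennreal_mult_le_mult_iff) auto
  then have "ennreal (real (card D) * c) \<le> 2 * R w"
    using \<open>0 \<le> c\<close> by (simp add: ennreal_mult ennreal_of_nat_eq_real_of_nat)
  then have "ennreal (real (card D) * c) / 2 \<le> R w"
    by (intro divide_le_posI_ennreal) auto
  then show ?thesis
    using \<open>0 \<le> c\<close> by (auto simp: ennreal_divide_numeral)
qed

definition block_tensor :: "'i set \<Rightarrow> ('i \<Rightarrow> 'a) \<Rightarrow> real \<Rightarrow> ('a \<Rightarrow> bool) \<Rightarrow> 'i \<Rightarrow> real" where
  "block_tensor U blk \<delta> v t = (if t \<in> U \<and> v (blk t) then \<delta> else 0)"

lemma borel_measurable_sq_loss: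
  fixes E :: "'a \<Rightarrow> 'i \<Rightarrow> real"
  assumes "S \<subseteq> I" and "\<And>t. t \<in> I \<Longrightarrow> (\<lambda>\<omega>. E \<omega> t) \<in> borel_measurable M"
  shows "(\<lambda>\<omega>. \<Sum>t\<in>S. (E \<omega> t - X t)\<^sup>2) \<in> borel_measurable M"
proof (rule borel_measurable_sum)
  fix t assume "t \<in> S"
  then have [measurable]: "(\<lambda>\<omega>. E \<omega> t) \<in> borel_measurable M"
    using assms by auto
  show "(\<lambda>\<omega>. (E \<omega> t - X t)\<^sup>2) \<in> borel_measurable M"
    by measurable
qed

lemma sum_risk_on_blocks_le:
  assumes I: "finite I" "U \<subseteq> I" and D: "finite D" "blk ` U \<subseteq> D"
    and E: "\<And>t. t \<in> I \<Longrightarrow> (\<lambda>\<omega>. E \<omega> t) \<in> borel_measurable (PiM I (\<lambda>_. obs_space))"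
  shows "(\<Sum>a\<in>D. risk_on I \<gamma> \<sigma> {t\<in>U. blk t = a} E X) \<le> risk_on I \<gamma> \<sigma> I E X"
proof -
  have "(\<lambda>\<omega>. E \<omega> t) \<in> borel_measurable (PiM I (\<lambda>t. obs_entry \<gamma> \<sigma> (X t)))" if "t \<in> I" for t
    using E[OF that] measurable_cong_sets[OF sets_PiM_obs_entry refl] by blast
  then have [measurable]: "(\<lambda>\<omega>. \<Sum>t\<in>{t\<in>U. blk t = a}. (E \<omega> t - X t)\<^sup>2)
      \<in> borel_measurable (PiM I (\<lambda>t. obs_entry \<gamma> \<sigma> (X t)))" for a
    using I(2) by (intro borel_measurable_sq_loss) auto
  have "(\<Sum>a\<in>D. risk_on I \<gamma> \<sigma> {t\<in>U. blk t = a} E X)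
      = (\<integral>\<^sup>+\<omega>. (\<Sum>a\<in>D. ennreal (\<Sum>t\<in>{t\<in>U. blk t = a}. (E \<omega> t - X t)\<^sup>2)) \<partial>PiM I (\<lambda>t. obs_entry \<gamma> \<sigma> (X t)))"
    unfolding risk_on_def by (intro nn_integral_sum[symmetric]) measurable
  also have "\<dots> \<le> risk_on I \<gamma> \<sigma> I E X"
    unfolding risk_on_def
  proof (intro nn_integral_mono)
    fix \<omega>
    have "(\<Sum>a\<in>D. \<Sum>t\<in>{t\<in>U. blk t = a}. (E \<omega> t - X t)\<^sup>2) = (\<Sum>t\<in>U. (E \<omega> t - X t)\<^sup>2)"
      using sum.group[OF finite_subset[OF I(2,1)] D] by simp
    also have "\<dots> \<le> (\<Sum>t\<in>I. (E \<omega> t - X t)\<^sup>2)"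
      using I by (intro sum_mono2) auto
    finally show "(\<Sum>a\<in>D. ennreal (\<Sum>t\<in>{t\<in>U. blk t = a}. (E \<omega> t - X t)\<^sup>2))
        \<le> ennreal (\<Sum>t\<in>I. (E \<omega> t - X t)\<^sup>2)"
      by (simp add: sum_nonneg ennreal_leI)
  qed
  finally show ?thesis .
qed

lemma sum_sq_diff_block_tensor_flip:
  assumes "card {t\<in>U. blk t = a} = L"
  shows "(\<Sum>t\<in>{t\<in>U. blk t = a}. (block_tensor U blk \<delta> v t - block_tensor U blk \<delta> (v(a := \<not> v a)) t)\<^sup>2)
    = real L * \<delta>\<^sup>2"
proof -
  have "(\<Sum>t\<in>{t\<in>U. blk t = a}. (block_tensor U blk \<delta> v t - block_tensor U blk \<delta> (v(a := \<not> v a)) t)\<^sup>2)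
      = (\<Sum>t\<in>{t\<in>U. blk t = a}. \<delta>\<^sup>2)"
    by (intro sum.cong refl) (auto simp: block_tensor_def)
  then show ?thesis
    using assms by simp
qed

lemma prod_affinity_block_tensor_flip:
  assumes "finite I" "U \<subseteq> I" and "card {t\<in>U. blk t = a} = L"
  shows "(\<Prod>t\<in>I. affinity \<gamma> \<sigma> (block_tensor U blk \<delta> v t) (block_tensor U blk \<delta> (v(a := \<not> v a)) t))
    = affinity \<gamma> \<sigma> \<delta> 0 ^ L"
proof -
  have "(\<Prod>t\<in>I. affinity \<gamma> \<sigma> (block_tensor U blk \<delta> v t) (block_tensor U blk \<delta> (v(a := \<not> v a)) t))
      = (\<Prod>t\<in>{t\<in>U. blk t = a}. affinity \<gamma> \<sigma> (block_tensor U blk \<delta> v t) (block_tensor U blk \<delta> (v(a := \<not> v a)) t))"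
    using assms(1,2) by (intro prod.mono_neutral_right) (auto simp: block_tensor_def)
  also have "\<dots> = (\<Prod>t\<in>{t\<in>U. blk t = a}. affinity \<gamma> \<sigma> \<delta> 0)"
    by (intro prod.cong refl) (auto simp: block_tensor_def affinity_commute)
  finally show ?thesis
    using assms(3) by simp
qed

lemma risk_on_block_tensor_lower_bound:
  assumes \<gamma>: "0 \<le> \<gamma>" "\<gamma> \<le> 1" and "0 < \<sigma>" and I: "finite I" "U \<subseteq> I" and D: "finite D" "blk ` U \<subseteq> D"
    and card_blk: "\<And>a. a \<in> D \<Longrightarrow> card {t\<in>U. blk t = a} = L"
    and small: "\<gamma> * real L * \<delta>\<^sup>2 \<le> \<sigma>\<^sup>2"
    and E: "\<And>t. t \<in> I \<Longrightarrow> (\<lambda>\<omega>. E \<omega> t) \<in> borel_measurable (PiM I (\<lambda>_. obs_space))"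
  shows "\<exists>v. ennreal (real (card D) * real L * \<delta>\<^sup>2 / 16) \<le> risk_on I \<gamma> \<sigma> I E (block_tensor U blk \<delta> v)"
proof -
  let ?X = "block_tensor U blk \<delta>" and ?B = "\<lambda>a. {t\<in>U. blk t = a}"
  have flip: "ennreal (real L * \<delta>\<^sup>2 / 8)
      \<le> risk_on I \<gamma> \<sigma> (?B a) E (?X v) + risk_on I \<gamma> \<sigma> (?B a) E (?X (v(a := \<not> v a)))"
    if a: "a \<in> D" for a v
  proof -
    have "(7 / 8)\<^sup>2 \<le> (affinity \<gamma> \<sigma> \<delta> 0 ^ L)\<^sup>2"
      using affinity_power_ge[OF \<gamma> \<open>0 < \<sigma>\<close> small] by (intro power_mono) auto
    then have "real L * \<delta>\<^sup>2 * (1 / 2) \<le> real L * \<delta>\<^sup>2 * (affinity \<gamma> \<sigma> \<delta> 0 ^ L)\<^sup>2"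
      by (intro mult_left_mono) (auto simp: power2_eq_square)
    then have "ennreal (real L * \<delta>\<^sup>2 / 8) \<le> ennreal (real L * \<delta>\<^sup>2 * (affinity \<gamma> \<sigma> \<delta> 0 ^ L)\<^sup>2 / 4)"
      by (intro ennreal_leI) simp
    also have "\<dots> \<le> risk_on I \<gamma> \<sigma> (?B a) E (?X v) + risk_on I \<gamma> \<sigma> (?B a) E (?X (v(a := \<not> v a)))"
      using risk_on_two_point[OF \<gamma> \<open>0 < \<sigma>\<close> I(1), of "?B a" E "?X v" "?X (v(a := \<not> v a))"] I(2) E
      unfolding sum_sq_diff_block_tensor_flip[OF card_blk[OF a]]
        prod_affinity_block_tensor_flip[OF I card_blk[OF a]]
      by blast
    finally show ?thesis .
  qed
  obtain v where "ennreal (real (card D) * (real L * \<delta>\<^sup>2 / 8) / 2) \<le> risk_on I \<gamma> \<sigma> I E (?X v)"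
    using assouad_hypercube[where T = "\<lambda>a v. risk_on I \<gamma> \<sigma> (?B a) E (?X v)"
        and R = "\<lambda>v. risk_on I \<gamma> \<sigma> I E (?X v)", OF D(1) _ sum_risk_on_blocks_le[OF I D E] flip]
    by auto
  then show ?thesis
    by (intro exI[of _ v]) (simp add: field_simps)
qed

lemma block_tensor_class_lower_bound:
  assumes "0 < \<gamma>" "\<gamma> \<le> 1" and "0 < \<sigma>" and "0 < b" and I: "finite I" "U \<subseteq> I" and D: "finite D" "blk ` U \<subseteq> D"
    and card_blk: "\<And>a. a \<in> D \<Longrightarrow> card {t\<in>U. blk t = a} = L" and "1 \<le> L"
    and E: "\<And>t. t \<in> I \<Longrightarrow> (\<lambda>\<omega>. E \<omega> t) \<in> borel_measurable (PiM I (\<lambda>_. obs_space))"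
    and C: "\<And>\<delta> v. 0 < \<delta> \<Longrightarrow> \<delta> \<le> b \<Longrightarrow> block_tensor U blk \<delta> v \<in> C"
  shows "\<exists>X\<in>C. ennreal (real (card D) * min (real L * b\<^sup>2) (\<sigma>\<^sup>2 / \<gamma>) / 16) \<le> risk_on I \<gamma> \<sigma> I E X"
proof -
  \<comment> \<open>the largest amplitude up to \<open>b\<close> for which one flipped block stays hard to detect\<close>
  define c where "c = \<sigma>\<^sup>2 / (\<gamma> * real L)"
  have c: "0 < c"
    using assms(1,3,10) by (simp add: c_def)
  define \<delta> where "\<delta> = min b (sqrt c)"
  have \<delta>: "0 < \<delta>" "\<delta> \<le> b"
    using assms(4) c by (auto simp: \<delta>_def)
  have "\<delta>\<^sup>2 = min (b\<^sup>2) c"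
  proof (cases "b \<le> sqrt c")
    case True
    then have "b\<^sup>2 \<le> (sqrt c)\<^sup>2" using assms(4) by (intro power_mono) auto
    then show ?thesis using True c by (simp add: \<delta>_def)
  next
    case False
    then have "(sqrt c)\<^sup>2 \<le> b\<^sup>2" using c by (intro power_mono) auto
    then show ?thesis using False c by (simp add: \<delta>_def min_def)
  qed
  then have L\<delta>: "real L * \<delta>\<^sup>2 = min (real L * b\<^sup>2) (\<sigma>\<^sup>2 / \<gamma>)"
    using assms(1,10) by (simp add: min_mult_distrib_left c_def)
  then have "real L * \<delta>\<^sup>2 \<le> \<sigma>\<^sup>2 / \<gamma>"
    by simp
  then have "\<gamma> * real L * \<delta>\<^sup>2 \<le> \<sigma>\<^sup>2"
    using assms(1) by (simp add: field_simps)
  then obtain v where "ennreal (real (card D) * real L * \<delta>\<^sup>2 / 16) \<le> risk_on I \<gamma> \<sigma> I E (block_tensor U blk \<delta> v)"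
    using risk_on_block_tensor_lower_bound[OF _ assms(2,3) I D card_blk _ E] assms(1) by fastforce
  then show ?thesis
    using C[OF \<delta>] L\<delta> by (metis mult.assoc)
qed

section \<open>Block tensors in the class U(r,b,s)\<close>

lemma tidx_iff [simp]: "(i, j, k) \<in> tidx n1 n2 n3 \<longleftrightarrow> i < n1 \<and> j < n2 \<and> k < n3"
  by (simp add: tidx_def)

lemma finite_tidx [simp]: "finite (tidx n1 n2 n3)"
  by (simp add: tidx_def)

lemma card_tidx: "card (tidx n1 n2 n3) = n1 * n2 * n3"
  by (simp add: tidx_def card_cartesian_product)

lemma card_div_eq: "0 < L \<Longrightarrow> card {j :: nat. j div L = l} = L"
proof -
  assume L: "0 < L"
  have "j div L = l \<longleftrightarrow> j \<in> {l * L..<l * L + L}" for j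
    using less_eq_div_iff_mult_less_eq[OF L, of l j] div_less_iff_less_mult[OF L, of j "Suc l"]
    by auto
  then have "{j. j div L = l} = {l * L..<l * L + L}"
    by blast
  then show ?thesis by simp
qed

lemma cyclic_shift_mod_eq_0_iff:
  fixes k q n :: nat
  assumes "k < n" "q < n"
  shows "(k + n - q) mod n = 0 \<longleftrightarrow> q = k"
  using assms by (cases "q \<le> k") (auto simp: le_mod_geq)

lemma tprod_first_slice_left:
  assumes A: "\<And>i l q. 0 < q \<Longrightarrow> A (i, l, q) = 0" and "k < n3"
  shows "tprod r n3 A B (i, j, k) = (\<Sum>l<r. A (i, l, 0) * B (l, j, k))"
proof -
  have "(\<Sum>q<n3. A (i, l, (k + n3 - q) mod n3) * B (l, j, q)) = A (i, l, 0) * B (l, j, k)" for l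
  proof -
    have "(\<Sum>q<n3. A (i, l, (k + n3 - q) mod n3) * B (l, j, q))
        = (\<Sum>q<n3. if q = k then A (i, l, 0) * B (l, j, k) else 0)"
    proof (rule sum.cong[OF refl])
      fix q assume "q \<in> {..<n3}"
      then have "(k + n3 - q) mod n3 = 0 \<longleftrightarrow> q = k"
        using \<open>k < n3\<close> by (simp add: cyclic_shift_mod_eq_0_iff)
      then show "A (i, l, (k + n3 - q) mod n3) * B (l, j, q) = (if q = k then A (i, l, 0) * B (l, j, k) else 0)"
        using A[of "(k + n3 - q) mod n3"] by auto
    qed
    then show ?thesis
      using \<open>k < n3\<close> by simp
  qed
  then show ?thesis
    by (simp add: tprod_def)
qed

lemma tprod_first_slice_right:
  assumes B: "\<And>l j q. 0 < q \<Longrightarrow> B (l, j, q) = 0" and "k < n3"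
  shows "tprod r n3 A B (i, j, k) = (\<Sum>l<r. A (i, l, k) * B (l, j, 0))"
proof -
  have "(\<Sum>q<n3. A (i, l, (k + n3 - q) mod n3) * B (l, j, q)) = A (i, l, k) * B (l, j, 0)" for l
  proof -
    have "(\<Sum>q<n3. A (i, l, (k + n3 - q) mod n3) * B (l, j, q))
        = (\<Sum>q<n3. if q = 0 then A (i, l, k) * B (l, j, 0) else 0)"
    proof (rule sum.cong[OF refl])
      fix q
      show "A (i, l, (k + n3 - q) mod n3) * B (l, j, q) = (if q = 0 then A (i, l, k) * B (l, j, 0) else 0)"
        using B[of q] \<open>k < n3\<close> by (cases "q = 0") simp_all
    qed
    then show ?thesis
      using \<open>k < n3\<close> by simp
  qed
  then show ?thesis
    by (simp add: tprod_def)
qed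

definition row_block :: "nat \<Rightarrow> idx \<Rightarrow> idx" where
  "row_block L = (\<lambda>(i, j, q). (i div L, j, q))"

definition col_block :: "nat \<Rightarrow> idx \<Rightarrow> idx" where
  "col_block g = (\<lambda>(i, j, q). (i, j div g, q))"

lemma card_row_block:
  assumes "0 < L" "k * L \<le> n1" and "a \<in> tidx k n2 n3"
  shows "card {t\<in>tidx n1 n2 n3. row_block L t = a} = L"
proof -
  obtain l j q where a: "a = (l, j, q)" "l < k" "j < n2" "q < n3"
    using assms(3) by (cases a) auto
  have "i < n1" if "i div L = l" for i
    using that a(2) assms(1,2) div_less_iff_less_mult[OF assms(1), of i k] by auto
  then have "{t\<in>tidx n1 n2 n3. row_block L t = a} = (\<lambda>i. (i, j, q)) ` {i. i div L = l}"
    using a by (auto simp: row_block_def)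
  then show ?thesis
    using assms(1) by (simp add: card_image inj_on_def card_div_eq)
qed

lemma card_col_block:
  assumes "0 < g" "r * g \<le> n2" and "a \<in> tidx n1 r n3"
  shows "card {t\<in>tidx n1 n2 n3. col_block g t = a} = g"
proof -
  obtain i l q where a: "a = (i, l, q)" "i < n1" "l < r" "q < n3"
    using assms(3) by (cases a) auto
  have "j < n2" if "j div g = l" for j
    using that a(3) assms(1,2) div_less_iff_less_mult[OF assms(1), of j r] by auto
  then have "{t\<in>tidx n1 n2 n3. col_block g t = a} = (\<lambda>j. (i, j, q)) ` {j. j div g = l}"
    using a by (auto simp: col_block_def)
  then show ?thesis
    using assms(1) by (simp add: card_image inj_on_def card_div_eq)
qed

lemma row_block_tensor_in_tclass:
  assumes "D \<subseteq> tidx r n2 n3" "card D \<le> s" and "0 < \<delta>" "\<delta> \<le> b"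
  shows "block_tensor {t\<in>tidx n1 n2 n3. row_block L t \<in> D} (row_block L) \<delta> v \<in> tclass n1 n2 n3 r b s"
proof -
  define A :: tensor where "A = (\<lambda>(i, l, q). if q = 0 \<and> l = i div L then 1 else 0)"
  define B :: tensor where "B = (\<lambda>(l, j, q). if (l, j, q) \<in> D \<and> v (l, j, q) then \<delta> else 0)"
  have "card {t\<in>tidx r n2 n3. B t \<noteq> 0} \<le> card D"
    using assms(1) by (intro card_mono) (auto simp: B_def finite_subset)
  moreover have "block_tensor {t\<in>tidx n1 n2 n3. row_block L t \<in> D} (row_block L) \<delta> v t
      = (if t \<in> tidx n1 n2 n3 then tprod r n3 A B t else 0)" for t
  proof (cases t)
    case (fields i j q)
    have "tprod r n3 A B (i, j, q) = B (i div L, j, q)" if "q < n3"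
    proof -
      have "tprod r n3 A B (i, j, q) = (\<Sum>l<r. A (i, l, 0) * B (l, j, q))"
        using that by (intro tprod_first_slice_left) (simp add: A_def)
      also have "\<dots> = (\<Sum>l<r. if l = i div L then B (i div L, j, q) else 0)"
        by (intro sum.cong) (auto simp: A_def)
      also have "\<dots> = B (i div L, j, q)"
        using assms(1) by (auto simp: B_def)
      finally show ?thesis .
    qed
    then show ?thesis
      by (auto simp: fields block_tensor_def row_block_def B_def)
  qed
  ultimately show ?thesis
    unfolding tclass_def using assms by (intro CollectI exI[of _ A] exI[of _ B]) (auto simp: A_def B_def)
qed

lemma col_block_tensor_in_tclass:
  assumes "0 < g" "r * g \<le> s" and "0 < \<delta>" "\<delta> \<le> b"
  shows "block_tensor {t\<in>tidx n1 n2 n3. col_block g t \<in> tidx n1 r n3} (col_block g) \<delta> v \<in> tclass n1 n2 n3 r b s"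
proof -
  define A :: tensor where "A = (\<lambda>(i, l, q). if v (i, l, q) then \<delta> / b else 0)"
  define B :: tensor where "B = (\<lambda>(l, j, q). if q = 0 \<and> l = j div g then b else 0)"
  have "{t\<in>tidx r n2 n3. B t \<noteq> 0} \<subseteq> (\<lambda>j. (j div g, j, 0)) ` {..<r * g}"
    using assms(1) by (auto simp: B_def div_less_iff_less_mult split: if_splits)
  then have "card {t\<in>tidx r n2 n3. B t \<noteq> 0} \<le> card ((\<lambda>j. (j div g, j, 0 :: nat)) ` {..<r * g})"
    by (rule card_mono[rotated]) simp
  also have "\<dots> \<le> r * g"
    using card_image_le[of "{..<r * g}" "\<lambda>j. (j div g, j, 0 :: nat)"] by simp
  finally have "card {t\<in>tidx r n2 n3. B t \<noteq> 0} \<le> r * g" .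
  moreover have "block_tensor {t\<in>tidx n1 n2 n3. col_block g t \<in> tidx n1 r n3} (col_block g) \<delta> v t
      = (if t \<in> tidx n1 n2 n3 then tprod r n3 A B t else 0)" for t
  proof (cases t)
    case (fields i j q)
    have "tprod r n3 A B (i, j, q) = (if j div g < r then A (i, j div g, q) * b else 0)" if "q < n3"
    proof -
      have "tprod r n3 A B (i, j, q) = (\<Sum>l<r. A (i, l, q) * B (l, j, 0))"
        using that by (intro tprod_first_slice_right) (simp add: B_def)
      also have "\<dots> = (\<Sum>l<r. if l = j div g then A (i, j div g, q) * b else 0)"
        by (intro sum.cong) (auto simp: B_def)
      also have "\<dots> = (if j div g < r then A (i, j div g, q) * b else 0)"
        by simp
      finally show ?thesis .
    qed
    then show ?thesis
      using assms(3,4) by (auto simp: fields block_tensor_def col_block_def A_def)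
  qed
  ultimately show ?thesis
    unfolding tclass_def using assms by (intro CollectI exI[of _ A] exI[of _ B]) (auto simp: A_def B_def)
qed

section \<open>The minimax lower bound\<close>

lemma block_tensor_risk_lower_bound:
  fixes blk :: "idx \<Rightarrow> 'a"
  assumes "0 < \<gamma>" "\<gamma> \<le> 1" and "0 < \<sigma>" and "0 < b" and E: "E \<in> estimators n1 n2 n3" and "finite D"
    and card_blk: "\<And>a. a \<in> D \<Longrightarrow> card {t\<in>tidx n1 n2 n3. blk t = a} = L" and "1 \<le> L"
    and C: "\<And>\<delta> v. 0 < \<delta> \<Longrightarrow> \<delta> \<le> b \<Longrightarrow> block_tensor {t\<in>tidx n1 n2 n3. blk t \<in> D} blk \<delta> v \<in> C"
  shows "\<exists>X\<in>C. ennreal (real (card D) * min (real L * b\<^sup>2) (\<sigma>\<^sup>2 / \<gamma>) / 16) \<le> risk n1 n2 n3 \<gamma> \<sigma> E X"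
  unfolding risk_eq_risk_on
proof (rule block_tensor_class_lower_bound[OF assms(1-4) finite_tidx _ \<open>finite D\<close> _ _ \<open>1 \<le> L\<close> _ C])
  show "card {t \<in> {t\<in>tidx n1 n2 n3. blk t \<in> D}. blk t = a} = L" if "a \<in> D" for a
  proof -
    have "{t \<in> {t\<in>tidx n1 n2 n3. blk t \<in> D}. blk t = a} = {t\<in>tidx n1 n2 n3. blk t = a}"
      using that by auto
    then show ?thesis
      using card_blk[OF that] by simp
  qed
  show "(\<lambda>\<omega>. E \<omega> t) \<in> borel_measurable (PiM (tidx n1 n2 n3) (\<lambda>_. obs_space))" if "t \<in> tidx n1 n2 n3" for t
    using E that by (simp add: estimators_def)
qed auto

lemma half_min_le_mult_min:
  fixes x y d l \<beta> K :: real
  assumes "x \<le> 2 * (d * l)" "y \<le> 2 * d" and "0 \<le> \<beta>" "0 \<le> K" "0 \<le> d"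
  shows "min (x * \<beta>) (y * K) / 2 \<le> d * min (l * \<beta>) K"
proof -
  have "x * \<beta> \<le> 2 * (d * l) * \<beta>" "y * K \<le> 2 * d * K"
    using assms by (simp_all add: mult_right_mono)
  then show ?thesis
    using assms(5) by (simp add: min_mult_distrib_left min_def mult_ac)
qed

lemma le_double_mult_div:
  fixes x k :: nat
  assumes "1 \<le> k" "k \<le> x"
  shows "x \<le> 2 * (k * (x div k))"
proof -
  have "x = k * (x div k) + x mod k" by simp
  moreover have "x mod k < k" "k \<le> k * (x div k)"
    using assms by (simp_all add: Suc_le_eq div_greater_zero_iff)
  ultimately show ?thesis by linarith
qed

lemma sparse_core_exists:
  fixes n1 n2 n3 r s :: nat
  assumes "1 \<le> n2" "1 \<le> n3" "1 \<le> r" "r \<le> n1" "r \<le> s" "s \<le> r * n2 * n3"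
  shows "\<exists>k D. 1 \<le> k \<and> k \<le> r \<and> D \<subseteq> tidx k n2 n3 \<and> card D \<le> s \<and> s \<le> 2 * card D \<and>
     min (n1 * n2 * n3) (n1 * s) \<le> 2 * card D * (n1 div k)"
  \<comment> \<open>one horizontal slice carrying \<open>s\<close> entries, or \<open>s div (n2 * n3)\<close> full slices\<close>
proof (cases "s \<le> n2 * n3")
  case True
  define D where "D = (\<lambda>p. (0::nat, p div n3, p mod n3)) ` {..<s}"
  have "inj_on (\<lambda>p. (0::nat, p div n3, p mod n3)) {..<s}"
    by (intro inj_onI) (metis div_mult_mod_eq prod.inject)
  then have card_D: "card D = s"
    by (simp add: D_def card_image)
  have "D \<subseteq> tidx 1 n2 n3"
    using True assms(2) by (auto simp: D_def div_less_iff_less_mult mult.commute)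
  then show ?thesis
    using card_D assms by (intro exI[of _ 1] exI[of _ D]) (auto simp: min_le_iff_disj)
next
  case False
  define k where "k = s div (n2 * n3)"
  have n23: "1 \<le> n2 * n3"
    using assms by simp
  have "k \<le> r * (n2 * n3) div (n2 * n3)"
    using assms(6) unfolding k_def by (intro div_le_mono) (simp add: mult.assoc)
  then have k: "1 \<le> k" "k \<le> r"
    using False n23 by (auto simp: k_def Suc_le_eq div_greater_zero_iff)
  have "k * (n2 * n3) \<le> s" "s \<le> 2 * (k * (n2 * n3))"
    using le_double_mult_div[OF n23, of s] False by (simp_all add: k_def mult.commute)
  moreover have "n1 * (n2 * n3) \<le> 2 * (k * (n1 div k)) * (n2 * n3)"
    using le_double_mult_div[of k n1] k assms(4) by (intro mult_right_mono) simp_all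
  ultimately show ?thesis
    using k by (intro exI[of _ k] exI[of _ "tidx k n2 n3"]) (auto simp: card_tidx mult_ac min_le_iff_disj)
qed

lemma sparse_risk_lower_bound:
  assumes "1 \<le> n2" "1 \<le> n3" "1 \<le> r" "r \<le> n1" "r \<le> s" "s \<le> r * n2 * n3"
    and "0 < \<gamma>" "\<gamma> \<le> 1" and "0 < \<sigma>" and "0 < b" and E: "E \<in> estimators n1 n2 n3"
  shows "\<exists>X\<in>tclass n1 n2 n3 r b s. ennreal (min (real (min (n1 * n2 * n3) (n1 * s)) * b\<^sup>2) (real s * (\<sigma>\<^sup>2 / \<gamma>)) / 32)
     \<le> risk n1 n2 n3 \<gamma> \<sigma> E X"
proof -
  obtain k D where kD: "1 \<le> k" "k \<le> r" "D \<subseteq> tidx k n2 n3" "card D \<le> s" "s \<le> 2 * card D"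
      "min (n1 * n2 * n3) (n1 * s) \<le> 2 * card D * (n1 div k)"
    using sparse_core_exists[OF assms(1-6)] by blast
  define L where "L = n1 div k"
  have L: "1 \<le> L" "k * L \<le> n1"
    using kD(1,2) assms(4) by (auto simp: L_def Suc_le_eq div_greater_zero_iff)
  have D: "finite D" "D \<subseteq> tidx r n2 n3"
    using kD(2,3) finite_subset[OF kD(3)] by auto
  have "card {t\<in>tidx n1 n2 n3. row_block L t = a} = L" if "a \<in> D" for a
    using card_row_block[of L k n1 a] L kD(3) that by auto
  then obtain X where X: "X \<in> tclass n1 n2 n3 r b s"
    "ennreal (real (card D) * min (real L * b\<^sup>2) (\<sigma>\<^sup>2 / \<gamma>) / 16) \<le> risk n1 n2 n3 \<gamma> \<sigma> E X"
    using block_tensor_risk_lower_bound[OF assms(7-10) E D(1) _ L(1) row_block_tensor_in_tclass[OF D(2) kD(4)]]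
    by blast
  have "min (real (min (n1 * n2 * n3) (n1 * s)) * b\<^sup>2) (real s * (\<sigma>\<^sup>2 / \<gamma>)) / 2
      \<le> real (card D) * min (real L * b\<^sup>2) (\<sigma>\<^sup>2 / \<gamma>)"
    using kD(5,6) assms(7) unfolding L_def
    by (intro half_min_le_mult_min) (simp_all flip: of_nat_mult)
  then show ?thesis
    using X by (intro bexI[of _ X] order.trans[OF _ X(2)] ennreal_leI) simp_all
qed

lemma lowrank_risk_lower_bound:
  assumes "1 \<le> n3" "1 \<le> r" "r \<le> n2" "r \<le> s"
    and "0 < \<gamma>" "\<gamma> \<le> 1" and "0 < \<sigma>" and "0 < b" and E: "E \<in> estimators n1 n2 n3"
  shows "\<exists>X\<in>tclass n1 n2 n3 r b s. ennreal (min (real (min (n1 * n2 * n3) (n1 * s)) * b\<^sup>2)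
       (real r * real n1 * real n3 * (\<sigma>\<^sup>2 / \<gamma>)) / 32) \<le> risk n1 n2 n3 \<gamma> \<sigma> E X"
proof -
  define g where "g = min n2 s div r"
  have g: "1 \<le> g" "r * g \<le> n2" "r * g \<le> s" "min n2 s \<le> 2 * (r * g)"
    using assms(2-4) le_double_mult_div[of r "min n2 s"] times_div_less_eq_dividend[of r "min n2 s"]
    by (auto simp: g_def Suc_le_eq div_greater_zero_iff)
  have "card {t\<in>tidx n1 n2 n3. col_block g t = a} = g" if "a \<in> tidx n1 r n3" for a
    using card_col_block[of g r n2 a] g that by auto
  moreover have "block_tensor {t\<in>tidx n1 n2 n3. col_block g t \<in> tidx n1 r n3} (col_block g) \<delta> v
      \<in> tclass n1 n2 n3 r b s" if "0 < \<delta>" "\<delta> \<le> b" for \<delta> v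
    using col_block_tensor_in_tclass[OF _ g(3) that] g(1) by simp
  ultimately obtain X where X: "X \<in> tclass n1 n2 n3 r b s"
    "ennreal (real (card (tidx n1 r n3)) * min (real g * b\<^sup>2) (\<sigma>\<^sup>2 / \<gamma>) / 16) \<le> risk n1 n2 n3 \<gamma> \<sigma> E X"
    using block_tensor_risk_lower_bound[OF assms(5-8) E finite_tidx _ g(1)] by blast
  have "min (n1 * n2 * n3) (n1 * s) \<le> n1 * n3 * min n2 s"
  proof (cases "n2 \<le> s")
    case False
    have "min (n1 * n2 * n3) (n1 * s) \<le> n1 * s"
      by simp
    also have "\<dots> \<le> n1 * n3 * min n2 s"
      using False \<open>1 \<le> n3\<close> by simp
    finally show ?thesis .
  qed (simp add: min_def mult_ac)
  also have "\<dots> \<le> 2 * (n1 * r * n3 * g)"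
    using g(4) by (simp add: mult_ac)
  finally have "min (real (min (n1 * n2 * n3) (n1 * s)) * b\<^sup>2) (real r * real n1 * real n3 * (\<sigma>\<^sup>2 / \<gamma>)) / 2
      \<le> real (card (tidx n1 r n3)) * min (real g * b\<^sup>2) (\<sigma>\<^sup>2 / \<gamma>)"
    using assms(5) unfolding card_tidx
    by (intro half_min_le_mult_min) (simp_all flip: of_nat_mult add: mult_ac)
  then show ?thesis
    using X by (intro bexI[of _ X] order.trans[OF _ X(2)] ennreal_leI) simp_all
qed

lemma combine_two_lower_bounds:
  fixes R :: "'a \<Rightarrow> ennreal" and a c d :: real
  assumes "X1 \<in> C" "ennreal (min a c / 32) \<le> R X1" and "X2 \<in> C" "ennreal (min a d / 32) \<le> R X2"
    and "0 \<le> a" "0 \<le> c" "0 \<le> d"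
  shows "\<exists>X\<in>C. ennreal (min a (c + d) / 64) \<le> R X"
proof (cases "min a d \<le> min a c")
  case True
  then have "min a (c + d) / 64 \<le> min a c / 32"
    using assms(5-7) by (auto simp: min_def split: if_splits)
  then show ?thesis
    using assms(1,2) by (blast intro: order.trans ennreal_leI)
next
  case False
  then have "min a (c + d) / 64 \<le> min a d / 32"
    using assms(5-7) by (auto simp: min_def split: if_splits)
  then show ?thesis
    using assms(3,4) by (blast intro: order.trans ennreal_leI)
qed

lemma ennreal_le_SUP_divide:
  fixes R :: "'a \<Rightarrow> ennreal"
  assumes "X \<in> C" "ennreal (N * T) \<le> R X" and "0 < N" "0 \<le> T"
  shows "ennreal T \<le> (SUP X\<in>C. R X / ennreal N)"
proof -
  have "ennreal T = ennreal (N * T) / ennreal N"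
    using assms(3,4) by (simp add: divide_ennreal)
  also have "\<dots> \<le> R X / ennreal N"
    using assms(2) by (rule divide_right_mono_ennreal)
  finally show ?thesis
    using assms(1) by (intro SUP_upper2)
qed

lemma estimator_minimax_lower_bound:
  fixes n1 n2 n3 r s m :: nat and b \<sigma> :: real
  assumes "1 \<le> n2" "1 \<le> n3" and "0 < b" "0 < \<sigma>" and "1 \<le> r" "r \<le> n1" "r \<le> n2" "r \<le> s" "s \<le> r * n2 * n3"
    and "1 \<le> m" "m \<le> n1 * n2 * n3" and E: "E \<in> estimators n1 n2 n3"
  shows "ennreal (1 / 64 * min (min 1 (real s / real (n2 * n3)) * b\<^sup>2)
            (\<sigma>\<^sup>2 * ((real s + real r * real n1 * real n3) / real m)))
     \<le> (SUP X\<in>tclass n1 n2 n3 r b s. risk n1 n2 n3 (real m / real (n1 * n2 * n3)) \<sigma> E X / ennreal (real (n1 * n2 * n3)))"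
proof -
  define N where "N = real (n1 * n2 * n3)"
  define \<gamma> where "\<gamma> = real m / N"
  define K where "K = \<sigma>\<^sup>2 / \<gamma>"
  define a where "a = real (min (n1 * n2 * n3) (n1 * s)) * b\<^sup>2"
  define P where "P = real r * real n1 * real n3"
  let ?\<Delta>b = "min 1 (real s / real (n2 * n3)) * b\<^sup>2" and ?v = "\<sigma>\<^sup>2 * ((real s + P) / real m)"
  define T where "T = 1 / 64 * min ?\<Delta>b ?v"
  have N: "0 < N" "real m \<le> N"
    using assms(1,2,5,6,11) by (simp_all add: N_def flip: of_nat_mult)
  then have \<gamma>: "0 < \<gamma>" "\<gamma> \<le> 1"
    using assms(10) by (simp_all add: \<gamma>_def)
  have "N * (real s / real (n2 * n3)) = real (n1 * s)"
    using assms(1,2) by (simp add: N_def field_simps)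
  then have Na: "N * ?\<Delta>b = a"
    using N(1) by (simp add: min_mult_distrib_left N_def of_nat_min a_def mult.assoc)
  have "N * T = N * min ?\<Delta>b ?v / 64"
    by (simp add: T_def)
  also have "N * min ?\<Delta>b ?v = min (N * ?\<Delta>b) (N * ?v)"
    using N(1) by (simp add: min_mult_distrib_left)
  also have "N * ?v = real s * K + P * K"
    using N assms(10) by (simp add: K_def \<gamma>_def field_simps)
  finally have rate: "N * T = min a (real s * K + P * K) / 64"
    unfolding Na .
  obtain X1 where "X1 \<in> tclass n1 n2 n3 r b s" "ennreal (min a (real s * K) / 32) \<le> risk n1 n2 n3 \<gamma> \<sigma> E X1"
    using sparse_risk_lower_bound[OF assms(1,2,5,6,8,9) \<gamma> assms(4,3) E] by (auto simp: a_def K_def)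
  moreover obtain X2 where "X2 \<in> tclass n1 n2 n3 r b s" "ennreal (min a (P * K) / 32) \<le> risk n1 n2 n3 \<gamma> \<sigma> E X2"
    using lowrank_risk_lower_bound[OF assms(2,5,7,8) \<gamma> assms(4,3) E] by (auto simp: a_def K_def P_def)
  ultimately obtain X where "X \<in> tclass n1 n2 n3 r b s" "ennreal (N * T) \<le> risk n1 n2 n3 \<gamma> \<sigma> E X"
    using combine_two_lower_bounds[of X1 _ a "real s * K" _ X2 "P * K"] \<gamma> unfolding rate
    by (auto simp: a_def K_def P_def)
  moreover have "0 \<le> T"
    by (simp add: T_def P_def)
  ultimately have "ennreal T \<le> (SUP X\<in>tclass n1 n2 n3 r b s. risk n1 n2 n3 \<gamma> \<sigma> E X / ennreal N)"
    by (rule ennreal_le_SUP_divide[where R = "risk n1 n2 n3 \<gamma> \<sigma> E", OF _ _ N(1)])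
  then show ?thesis
    unfolding T_def P_def N_def \<gamma>_def .
qed

theorem proposition4:
  "\<exists>C \<beta>c :: real. C > 0 \<and> \<beta>c > 0 \<and>
    (\<forall>(n1::nat) (n2::nat) (n3::nat) (b::real) (\<sigma>::real) (r::nat) (s::nat) (m::nat).
      n1 \<ge> 2 \<longrightarrow> n2 \<ge> 2 \<longrightarrow> n3 \<ge> 2 \<longrightarrow> b > 0 \<longrightarrow> \<sigma> > 0 \<longrightarrow>
      r \<le> min n1 n2 \<longrightarrow> r \<le> s \<longrightarrow> s \<le> r * n2 * n3 \<longrightarrow> 1 \<le> m \<longrightarrow> m \<le> n1 * n2 * n3 \<longrightarrow>
      (let \<gamma> = real m / real (n1 * n2 * n3);
           \<Delta> = min 1 (real s / real (n2 * n3))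
       in (INF E\<in>estimators n1 n2 n3. SUP X\<in>tclass n1 n2 n3 r b s.
             risk n1 n2 n3 \<gamma> \<sigma> E X / ennreal (real (n1 * n2 * n3)))
          \<ge> ennreal (C * min (\<Delta> * b\<^sup>2)
                 (\<beta>c\<^sup>2 * \<sigma>\<^sup>2 * ((real s + real r * real n1 * real n3) / real m)))))"
proof (rule exI[of _ "1 / 64"], rule exI[of _ 1], intro conjI allI impI)
  fix n1 n2 n3 :: nat and b \<sigma> :: real and r s m :: nat
  assume n: "n1 \<ge> 2" "n2 \<ge> 2" "n3 \<ge> 2" and "b > 0" "\<sigma> > 0"
    and r: "r \<le> min n1 n2" "r \<le> s" "s \<le> r * n2 * n3" and m: "1 \<le> m" "m \<le> n1 * n2 * n3"
  show "let \<gamma> = real m / real (n1 * n2 * n3); \<Delta> = min 1 (real s / real (n2 * n3))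
     in (INF E\<in>estimators n1 n2 n3. SUP X\<in>tclass n1 n2 n3 r b s.
           risk n1 n2 n3 \<gamma> \<sigma> E X / ennreal (real (n1 * n2 * n3)))
        \<ge> ennreal (1 / 64 * min (\<Delta> * b\<^sup>2)
               (1\<^sup>2 * \<sigma>\<^sup>2 * ((real s + real r * real n1 * real n3) / real m)))"
  proof (cases "r = 0")
    case True
    then show ?thesis
      using r by (simp add: Let_def)
  next
    case False
    show ?thesis
      unfolding Let_def power_one mult_1_left
      by (intro INF_greatest estimator_minimax_lower_bound)
        (use n r m False \<open>b > 0\<close> \<open>\<sigma> > 0\<close> in auto)
  qed
qed simp_all

end
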